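(* Let $X$ be a simplicial set. There is an ordinal $\lambda$ such that $J^\lambda X$ is non-singular.
   Context: A simplex is embedded if its representing map is degreewise injective; a simplicial set is non-singular if every non-degenerate simplex is embedded. $Y^\sharp$ is the set of non-degenerate simplices of $Y$, $n_x$ the degree of $x$, $\bar x$ its representing map, $\varepsilon_i:[0]\to[n]$ the operator $0\mapsto i$. Enforcer: for $x\in Y^\sharp$ of degree $n$, let $i\sim j$ iff $x\varepsilon_i=x\varepsilon_j$, $i\approx k$ iff some $j$ has $i\le k\le j$ and $i\sim j$, and $\simeq$ the equivalence relation generated by $\approx$; its classes are intervals, and $\rho_x:[n]\to[m_x]$ is the order-preserving surjection onto the ordered quotient $\{0,\dots,n\}/\simeq\cong[m_x]$. Enforced collapse: $JY$ is the pushout of $\bigsqcup_{x\in Y^\sharp}\Delta[m_x]\xleftarrow{\sqcup_x\rho_x}\bigsqcup_{x\in Y^\sharp}\Delta[n_x]\xrightarrow{(\bar x)_x}Y$. Iteration: $J^0X=X$, $J^{\beta+1}X=J(J^\beta X)$ with $f^{\beta,\beta+1}:J^\beta X\to J^{\beta+1}X$ the canonical map, and for a limit ordinal $\gamma$, $J^\gamma X=\operatorname{colim}_{\beta<\gamma}J^\beta X$ (the quotient of $X$ identifying $x,y$ iff $f^{0,\beta}(x)=f^{0,\beta}(y)$ for some $\beta<\gamma$); $f^{\alpha,\beta}$ are the induced maps. *)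

theory Defs
  imports Main
begin

text \<open>A simplicial set with simplices drawn from type 'a: simp X n is the set X_n of
n-simplices, and smap X m n theta x is x theta for an order preserving
theta : [m] -> [n] (represented by a function nat => nat; only its values on
0..m matter).\<close>

record 'a sset =
  simp :: "nat \<Rightarrow> 'a set"
  smap :: "nat \<Rightarrow> nat \<Rightarrow> (nat \<Rightarrow> nat) \<Rightarrow> 'a \<Rightarrow> 'a"

definition delta_map :: "nat \<Rightarrow> nat \<Rightarrow> (nat \<Rightarrow> nat) \<Rightarrow> bool" where
  "delta_map m n \<theta> \<longleftrightarrow> (\<forall>i\<le>m. \<theta> i \<le> n) \<and> (\<forall>i j. i \<le> j \<longrightarrow> j \<le> m \<longrightarrow> \<theta> i \<le> \<theta> j)"

definition is_sset :: "'a sset \<Rightarrow> bool" where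
  "is_sset X \<longleftrightarrow>
     (\<forall>m n \<theta> x. delta_map m n \<theta> \<longrightarrow> x \<in> simp X n \<longrightarrow> smap X m n \<theta> x \<in> simp X m) \<and>
     (\<forall>n x. x \<in> simp X n \<longrightarrow> smap X n n id x = x) \<and>
     (\<forall>k m n \<phi> \<theta> x. delta_map k m \<phi> \<longrightarrow> delta_map m n \<theta> \<longrightarrow> x \<in> simp X n \<longrightarrow>
        smap X k m \<phi> (smap X m n \<theta> x) = smap X k n (\<theta> \<circ> \<phi>) x) \<and>
     (\<forall>m n \<theta> \<theta>' x. x \<in> simp X n \<longrightarrow> (\<forall>i\<le>m. \<theta> i = \<theta>' i) \<longrightarrow>
        smap X m n \<theta> x = smap X m n \<theta>' x)"

text \<open>Every J^beta X is a quotient of X; we represent it by a simplicial congruence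
R on X (R n an equivalence relation on X_n, compatible with all operators).\<close>

definition is_cong :: "'a sset \<Rightarrow> (nat \<Rightarrow> ('a \<times> 'a) set) \<Rightarrow> bool" where
  "is_cong X R \<longleftrightarrow> (\<forall>n. equiv (simp X n) (R n)) \<and>
     (\<forall>m n \<theta> x y. delta_map m n \<theta> \<longrightarrow> (x, y) \<in> R n \<longrightarrow>
        (smap X m n \<theta> x, smap X m n \<theta> y) \<in> R m)"

definition cong_hull :: "'a sset \<Rightarrow> (nat \<Rightarrow> ('a \<times> 'a) set) \<Rightarrow> nat \<Rightarrow> ('a \<times> 'a) set" where
  "cong_hull X G = (\<lambda>n. \<Inter>{R n | R. is_cong X R \<and> (\<forall>m. G m \<subseteq> R m)})"

definition id_cong :: "'a sset \<Rightarrow> nat \<Rightarrow> ('a \<times> 'a) set" where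
  "id_cong X = (\<lambda>n. Id_on (simp X n))"

definition sdeg :: "nat \<Rightarrow> nat \<Rightarrow> nat" where
  "sdeg i j = (if j \<le> i then j else j - 1)"

definition nondeg_q :: "'a sset \<Rightarrow> (nat \<Rightarrow> ('a \<times> 'a) set) \<Rightarrow> nat \<Rightarrow> 'a \<Rightarrow> bool" where
  "nondeg_q X R n x \<longleftrightarrow> x \<in> simp X n \<and>
     \<not> (\<exists>k i y. n = Suc k \<and> i \<le> k \<and> y \<in> simp X k \<and> (x, smap X n k (sdeg i) y) \<in> R n)"

text \<open>The class of x in X_n is embedded in X/R: its representing map
Delta[n] -> X/R, theta |-> [x theta], is injective in every degree.\<close>
definition embedded_q :: "'a sset \<Rightarrow> (nat \<Rightarrow> ('a \<times> 'a) set) \<Rightarrow> nat \<Rightarrow> 'a \<Rightarrow> bool" where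
  "embedded_q X R n x \<longleftrightarrow>
     (\<forall>m \<theta> \<theta>'. delta_map m n \<theta> \<longrightarrow> delta_map m n \<theta>' \<longrightarrow>
        (smap X m n \<theta> x, smap X m n \<theta>' x) \<in> R m \<longrightarrow> (\<forall>i\<le>m. \<theta> i = \<theta>' i))"

definition nonsingular_q :: "'a sset \<Rightarrow> (nat \<Rightarrow> ('a \<times> 'a) set) \<Rightarrow> bool" where
  "nonsingular_q X R \<longleftrightarrow> (\<forall>n x. nondeg_q X R n x \<longrightarrow> embedded_q X R n x)"

definition enf_sim :: "'a sset \<Rightarrow> (nat \<Rightarrow> ('a \<times> 'a) set) \<Rightarrow> nat \<Rightarrow> 'a \<Rightarrow> nat \<Rightarrow> nat \<Rightarrow> bool" where
  "enf_sim X R n x i j \<longleftrightarrow> i \<le> n \<and> j \<le> n \<and>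
     (smap X 0 n (\<lambda>_. i) x, smap X 0 n (\<lambda>_. j) x) \<in> R 0"

definition enf_approx :: "'a sset \<Rightarrow> (nat \<Rightarrow> ('a \<times> 'a) set) \<Rightarrow> nat \<Rightarrow> 'a \<Rightarrow> (nat \<times> nat) set" where
  "enf_approx X R n x = {(i, k). \<exists>j. i \<le> k \<and> k \<le> j \<and> enf_sim X R n x i j}"

definition enf_simeq :: "'a sset \<Rightarrow> (nat \<Rightarrow> ('a \<times> 'a) set) \<Rightarrow> nat \<Rightarrow> 'a \<Rightarrow> (nat \<times> nat) set" where
  "enf_simeq X R n x = (enf_approx X R n x \<union> (enf_approx X R n x)\<inverse>)\<^sup>*"

text \<open>rho_x : [n] -> [m_x], the order preserving surjection onto the ordered
quotient {0..n}/simeq (whose classes are intervals): rho_x i is the index of the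
class of i, i.e. the number of class boundaries j-1 | j with 0 < j <= i.\<close>
definition enf_rho :: "'a sset \<Rightarrow> (nat \<Rightarrow> ('a \<times> 'a) set) \<Rightarrow> nat \<Rightarrow> 'a \<Rightarrow> nat \<Rightarrow> nat" where
  "enf_rho X R n x i = card {j. 0 < j \<and> j \<le> i \<and> (j - 1, j) \<notin> enf_simeq X R n x}"

text \<open>For Y = X/R, JY is the pushout of the coproduct of the rho_x along the
representing maps; since each rho_x is a (split) surjection, this is the
quotient of Y by the simplicial congruence generated by the pairs
(x theta, x theta') with x non-degenerate and rho_x theta = rho_x theta'.\<close>
definition J_step :: "'a sset \<Rightarrow> (nat \<Rightarrow> ('a \<times> 'a) set) \<Rightarrow> nat \<Rightarrow> ('a \<times> 'a) set" where
  "J_step X R = cong_hull X (\<lambda>k. R k \<union>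
     {(smap X k n \<theta> x, smap X k n \<theta>' x) | n x \<theta> \<theta>'.
        nondeg_q X R n x \<and> delta_map k n \<theta> \<and> delta_map k n \<theta>' \<and>
        (\<forall>i\<le>k. enf_rho X R n x (\<theta> i) = enf_rho X R n x (\<theta>' i))})"

text \<open>Ordinals are represented by elements of well-orders: for a well-order r and
b in Field r, J_iter X r b represents J^beta X where beta is the order type of
the strict predecessors of b.\<close>

definition imm_pred :: "('o \<times> 'o) set \<Rightarrow> 'o \<Rightarrow> 'o \<Rightarrow> bool" where
  "imm_pred r p b \<longleftrightarrow> (p, b) \<in> r - Id \<and> \<not> (\<exists>z. (p, z) \<in> r - Id \<and> (z, b) \<in> r - Id)"

definition J_iter :: "'a sset \<Rightarrow> ('o \<times> 'o) set \<Rightarrow> 'o \<Rightarrow> nat \<Rightarrow> ('a \<times> 'a) set" where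
  "J_iter X r = wfrec (r - Id) (\<lambda>g b.
     if \<not> (\<exists>y. (y, b) \<in> r - Id) then id_cong X
     else if (\<exists>p. imm_pred r p b) then J_step X (g (THE p. imm_pred r p b))
     else (\<lambda>n. \<Union>y\<in>{y. (y, b) \<in> r - Id}. g y n))"

end

theory Submission
  imports Defs
begin

text \<open>Every \<open>J\<^sup>\<beta> X\<close> is a quotient of \<open>X\<close> by a congruence that grows with \<open>\<beta>\<close>, and a
fixed point of \<open>J\<close> is non-singular: if a non-degenerate \<open>x\<close> had \<open>x \<epsilon>\<^sub>i = x \<epsilon>\<^sub>j\<close> with
\<open>i < j\<close>, then \<open>\<rho>\<^sub>x\<close> would merge \<open>i\<close> and \<open>i + 1\<close> and \<open>J\<close> would identify \<open>x\<close> with a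
degenerate simplex; so distinct vertices of \<open>x\<close> stay distinct, which makes \<open>x\<close> embedded.
The iteration must become stationary: fix a well-order of the simplices of \<open>X\<close>; every
proper enlargement of the congruence makes some simplex stop being the least element of its
class, so a never stationary iteration indexed by a well-order on the subsets of
\<open>\<nat> \<times> X\<close> would inject those subsets into \<open>\<nat> \<times> X\<close>, contradicting Cantor.\<close>

section \<open>Congruences on a simplicial set\<close>

lemma is_ssetD:
  assumes "is_sset X"
  shows is_sset_smap_closed: "delta_map m n \<theta> \<Longrightarrow> x \<in> simp X n \<Longrightarrow> smap X m n \<theta> x \<in> simp X m"
    and is_sset_smap_id: "x \<in> simp X n \<Longrightarrow> smap X n n id x = x"
    and is_sset_smap_comp: "delta_map k m \<phi> \<Longrightarrow> delta_map m n \<theta> \<Longrightarrow> x \<in> simp X n \<Longrightarrow>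
        smap X k m \<phi> (smap X m n \<theta> x) = smap X k n (\<theta> \<circ> \<phi>) x"
  using assms unfolding is_sset_def by blast+

lemma is_cong_equiv: "is_cong X R \<Longrightarrow> equiv (simp X n) (R n)"
  unfolding is_cong_def by simp

lemma is_cong_smap: "is_cong X R \<Longrightarrow> delta_map m n \<theta> \<Longrightarrow> (x, y) \<in> R n \<Longrightarrow>
    (smap X m n \<theta> x, smap X m n \<theta> y) \<in> R m"
  unfolding is_cong_def by simp

lemma is_cong_full: "is_sset X \<Longrightarrow> is_cong X (\<lambda>n. simp X n \<times> simp X n)"
  unfolding is_cong_def is_sset_def by (auto intro: equivI simp: refl_on_def sym_def trans_def)

lemma is_cong_id_cong: "is_sset X \<Longrightarrow> is_cong X (id_cong X)"
  unfolding is_cong_def is_sset_def id_cong_def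
  by (auto intro: equivI simp: refl_on_def sym_def trans_def)

lemma equiv_INTER:
  assumes "S \<noteq> {}" and "\<And>x. x \<in> S \<Longrightarrow> equiv A (r x)"
  shows "equiv A (\<Inter>x\<in>S. r x)"
proof (rule equivI)
  obtain x where "x \<in> S" using assms(1) by blast
  then show "(\<Inter>x\<in>S. r x) \<subseteq> A \<times> A"
    using assms(2)[of x] by (auto elim: equivE)
  have "refl_on (\<Inter>x\<in>S. A) (\<Inter>x\<in>S. r x)"
    using assms(2) by (intro refl_on_INTER) (simp add: equiv_def)
  then show "refl_on A (\<Inter>x\<in>S. r x)"
    using assms(1) by simp
  show "sym (\<Inter>x\<in>S. r x)" "trans (\<Inter>x\<in>S. r x)"
    using assms(2) by (intro sym_INTER trans_INTER; simp add: equiv_def)+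
qed

lemma equiv_UNION_chain:
  assumes "S \<noteq> {}" and "\<And>x. x \<in> S \<Longrightarrow> equiv A (r x)"
    and "\<And>x y. x \<in> S \<Longrightarrow> y \<in> S \<Longrightarrow> r x \<subseteq> r y \<or> r y \<subseteq> r x"
  shows "equiv A (\<Union>x\<in>S. r x)"
proof (rule equivI)
  show "(\<Union>x\<in>S. r x) \<subseteq> A \<times> A"
    using assms(2) by (auto elim: equivE)
  obtain x where x: "x \<in> S" using assms(1) by blast
  show "refl_on A (\<Union>x\<in>S. r x)"
  proof (rule refl_onI)
    fix a assume "a \<in> A"
    then have "(a, a) \<in> r x"
      using assms(2)[OF x] by (auto elim: equivE dest: refl_onD)
    then show "(a, a) \<in> (\<Union>x\<in>S. r x)"
      using x by blast
  qed
  show "sym (\<Union>x\<in>S. r x)"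
    using assms(2) by (intro sym_UNION) (auto elim: equivE)
  show "trans (\<Union>x\<in>S. r x)"
  proof (rule transI)
    fix a b c
    assume "(a, b) \<in> (\<Union>x\<in>S. r x)" "(b, c) \<in> (\<Union>x\<in>S. r x)"
    then obtain x y where xy: "x \<in> S" "y \<in> S" and "(a, b) \<in> r x" "(b, c) \<in> r y"
      by blast
    moreover have "trans (r x)" "trans (r y)"
      using xy assms(2) by (auto elim: equivE)
    ultimately show "(a, c) \<in> (\<Union>x\<in>S. r x)"
      using assms(3)[OF xy] by (auto dest: transD)
  qed
qed

lemma is_cong_INTER:
  assumes "F \<noteq> {}" and "\<And>R. R \<in> F \<Longrightarrow> is_cong X R"
  shows "is_cong X (\<lambda>n. \<Inter>R\<in>F. R n)"
  unfolding is_cong_def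
proof (intro conjI allI impI)
  show "equiv (simp X n) (\<Inter>R\<in>F. R n)" for n
    using assms by (intro equiv_INTER) (auto intro: is_cong_equiv)
  show "(smap X m n \<theta> x, smap X m n \<theta> y) \<in> (\<Inter>R\<in>F. R m)"
    if "delta_map m n \<theta>" "(x, y) \<in> (\<Inter>R\<in>F. R n)" for m n \<theta> x y
    using that assms(2) by (auto intro: is_cong_smap)
qed

lemma is_cong_UNION_chain:
  assumes "I \<noteq> {}" and "\<And>i. i \<in> I \<Longrightarrow> is_cong X (F i)"
    and "\<And>i j. i \<in> I \<Longrightarrow> j \<in> I \<Longrightarrow> F i \<le> F j \<or> F j \<le> F i"
  shows "is_cong X (\<lambda>n. \<Union>i\<in>I. F i n)"
  unfolding is_cong_def
proof (intro conjI allI impI)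
  show "equiv (simp X n) (\<Union>i\<in>I. F i n)" for n
  proof (rule equiv_UNION_chain)
    show "equiv (simp X n) (F i n)" if "i \<in> I" for i
      using assms(2)[OF that] by (rule is_cong_equiv)
    show "F i n \<subseteq> F j n \<or> F j n \<subseteq> F i n" if "i \<in> I" "j \<in> I" for i j
      using assms(3)[OF that] by (auto simp: le_fun_def)
  qed (rule assms(1))
  show "(smap X m n \<theta> x, smap X m n \<theta> y) \<in> (\<Union>i\<in>I. F i m)"
    if \<theta>: "delta_map m n \<theta>" and xy: "(x, y) \<in> (\<Union>i\<in>I. F i n)" for m n \<theta> x y
  proof -
    obtain i where "i \<in> I" "(x, y) \<in> F i n"
      using xy by blast
    then show ?thesis
      using is_cong_smap[OF assms(2) \<theta>] by blast
  qed
qed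

lemma cong_hull_generators: "G m \<subseteq> cong_hull X G m"
  unfolding cong_hull_def by blast

lemma is_cong_cong_hull:
  assumes "is_sset X" and "\<And>m. G m \<subseteq> simp X m \<times> simp X m"
  shows "is_cong X (cong_hull X G)"
proof -
  let ?F = "{R. is_cong X R \<and> (\<forall>m. G m \<subseteq> R m)}"
  have "(\<lambda>n. simp X n \<times> simp X n) \<in> ?F"
    using is_cong_full[OF assms(1)] assms(2) by simp
  then have "is_cong X (\<lambda>n. \<Inter>R\<in>?F. R n)"
    by (intro is_cong_INTER) auto
  moreover have "cong_hull X G = (\<lambda>n. \<Inter>R\<in>?F. R n)"
    unfolding cong_hull_def by (intro ext) (simp add: setcompr_eq_image)
  ultimately show ?thesis
    by simp
qed

lemma J_step_inflationary: "R \<le> J_step X R"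
  unfolding J_step_def le_fun_def
  by (intro allI order_trans[OF _ cong_hull_generators]) (rule Un_upper1)

lemma J_step_identifies:
  assumes "nondeg_q X R n x" "delta_map k n \<theta>" "delta_map k n \<theta>'"
    and "\<forall>i\<le>k. enf_rho X R n x (\<theta> i) = enf_rho X R n x (\<theta>' i)"
  shows "(smap X k n \<theta> x, smap X k n \<theta>' x) \<in> J_step X R k"
  unfolding J_step_def using assms by (intro subsetD[OF cong_hull_generators] UnI2) blast

lemma is_cong_J_step:
  assumes X: "is_sset X" and R: "is_cong X R"
  shows "is_cong X (J_step X R)"
  unfolding J_step_def
proof (rule is_cong_cong_hull[OF X])
  fix m
  have "R m \<subseteq> simp X m \<times> simp X m"
    using is_cong_equiv[OF R] by (auto elim: equivE)
  then show "R m \<union> {(smap X m n \<theta> x, smap X m n \<theta>' x) | n x \<theta> \<theta>'.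
        nondeg_q X R n x \<and> delta_map m n \<theta> \<and> delta_map m n \<theta>' \<and>
        (\<forall>i\<le>m. enf_rho X R n x (\<theta> i) = enf_rho X R n x (\<theta>' i))} \<subseteq> simp X m \<times> simp X m"
    using is_sset_smap_closed[OF X] unfolding nondeg_q_def by auto
qed

section \<open>Transfinite iteration of the enforced collapse\<close>

lemma Well_order_in_diff_Id:
  assumes "Well_order r" "a \<in> Field r" "b \<in> Field r"
  shows "(a, b) \<in> r \<longleftrightarrow> (b, a) \<notin> r - Id"
  using assms by (intro Linear_order_in_diff_Id) (simp_all add: well_order_on_def)

lemma imm_pred_unique:
  assumes "Well_order r" "imm_pred r p b" "imm_pred r q b"
  shows "p = q"
proof (rule ccontr)
  assume "p \<noteq> q"
  have "(p, b) \<in> r - Id" "(q, b) \<in> r - Id"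
    using assms(2,3) unfolding imm_pred_def by auto
  then have "(p, q) \<in> r - Id \<or> (q, p) \<in> r - Id"
    using \<open>p \<noteq> q\<close> Well_order_in_diff_Id[OF assms(1), of p q] by (auto intro: FieldI1)
  then show False
    using assms(2,3) unfolding imm_pred_def by blast
qed

lemma the_imm_pred: "Well_order r \<Longrightarrow> imm_pred r p b \<Longrightarrow> (THE p. imm_pred r p b) = p"
  by (blast intro: the_equality imm_pred_unique)

lemma J_iter_unfold:
  assumes "Well_order r"
  shows "J_iter X r b = (if \<not> (\<exists>y. (y, b) \<in> r - Id) then id_cong X
     else if (\<exists>p. imm_pred r p b) then J_step X (J_iter X r (THE p. imm_pred r p b))
     else (\<lambda>n. \<Union>y\<in>{y. (y, b) \<in> r - Id}. J_iter X r y n))"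
proof -
  have "wf (r - Id)"
    using assms by (simp add: well_order_on_def)
  moreover have "((THE p. imm_pred r p b), b) \<in> r - Id" if ex: "\<exists>p. imm_pred r p b"
  proof -
    obtain p where "imm_pred r p b"
      using ex by blast
    then show ?thesis
      using the_imm_pred[OF assms] by (simp add: imm_pred_def)
  qed
  ultimately show ?thesis
    unfolding J_iter_def by (subst wfrec) (auto simp: cut_def)
qed

lemma J_iter_least: "Well_order r \<Longrightarrow> \<nexists>y. (y, b) \<in> r - Id \<Longrightarrow> J_iter X r b = id_cong X"
  by (subst J_iter_unfold) auto

lemma J_iter_succ:
  assumes "Well_order r" "imm_pred r p b"
  shows "J_iter X r b = J_step X (J_iter X r p)"
proof -
  have "(THE p. imm_pred r p b) = p"
    using assms by (rule the_imm_pred)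
  moreover have "(p, b) \<in> r - Id"
    using assms(2) by (simp add: imm_pred_def)
  ultimately show ?thesis
    using assms by (subst J_iter_unfold) auto
qed

lemma J_iter_limit:
  assumes "Well_order r" "(c, b) \<in> r - Id" "\<nexists>p. imm_pred r p b"
  shows "J_iter X r b = (\<lambda>n. \<Union>y\<in>{y. (y, b) \<in> r - Id}. J_iter X r y n)"
  using assms by (subst J_iter_unfold) auto

lemma J_iter_grows:
  assumes W: "Well_order r" and "(c, b) \<in> r - Id"
  shows "J_step X (J_iter X r c) \<le> J_iter X r b"
proof -
  have "wf (r - Id)"
    using W by (simp add: well_order_on_def)
  then show ?thesis
    using assms(2)
  proof (induction b arbitrary: c rule: wf_induct_rule)
    case (less b)
    show ?case
    proof (cases "\<exists>p. imm_pred r p b")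
      case True
      then obtain p where p: "imm_pred r p b"
        by blast
      then have Jb: "J_iter X r b = J_step X (J_iter X r p)" and pb: "(p, b) \<in> r - Id"
        using J_iter_succ[OF W] by (auto simp: imm_pred_def)
      show ?thesis
      proof (cases "c = p")
        case True
        then show ?thesis
          using Jb by simp
      next
        case False
        have "(p, c) \<notin> r - Id"
          using p less.prems unfolding imm_pred_def by blast
        then have "(c, p) \<in> r - Id"
          using False Well_order_in_diff_Id[OF W, of c p] less.prems pb by (auto intro: FieldI1)
        then have "J_step X (J_iter X r c) \<le> J_iter X r p"
          using less.IH[OF pb] by blast
        also have "\<dots> \<le> J_iter X r b"
          unfolding Jb by (rule J_step_inflationary)
        finally show ?thesis .
      qed
    next
      case False
      then obtain z where cz: "(c, z) \<in> r - Id" and zb: "(z, b) \<in> r - Id"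
        using less.prems unfolding imm_pred_def by blast
      then have "J_step X (J_iter X r c) \<le> J_iter X r z"
        using less.IH by blast
      also have "\<dots> \<le> J_iter X r b"
        unfolding J_iter_limit[OF W zb False] le_fun_def using zb by blast
      finally show ?thesis .
    qed
  qed
qed

lemma J_iter_mono:
  assumes "Well_order r" and "(c, b) \<in> r"
  shows "J_iter X r c \<le> J_iter X r b"
proof (cases "c = b")
  case False
  then have "J_step X (J_iter X r c) \<le> J_iter X r b"
    using assms by (intro J_iter_grows) auto
  then show ?thesis
    using J_step_inflationary order_trans by blast
qed simp

lemma is_cong_J_iter:
  assumes X: "is_sset X" and W: "Well_order r"
  shows "is_cong X (J_iter X r b)"
proof -
  have "wf (r - Id)"
    using W by (simp add: well_order_on_def)
  then show ?thesis
  proof (induction b rule: wf_induct_rule)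
    case (less b)
    consider "\<nexists>y. (y, b) \<in> r - Id" | p where "imm_pred r p b"
      | c where "(c, b) \<in> r - Id" "\<nexists>p. imm_pred r p b"
      by blast
    then show ?case
    proof cases
      case 1
      then show ?thesis
        using J_iter_least[OF W 1, of X] is_cong_id_cong[OF X] by simp
    next
      case (2 p)
      then have "(p, b) \<in> r - Id"
        by (simp add: imm_pred_def)
      then show ?thesis
        using J_iter_succ[OF W 2, of X] less.IH is_cong_J_step[OF X] by simp
    next
      case (3 c)
      have "J_iter X r i \<le> J_iter X r j \<or> J_iter X r j \<le> J_iter X r i"
        if "(i, b) \<in> r - Id" "(j, b) \<in> r - Id" for i j
        using that Well_order_in_diff_Id[OF W, of i j] J_iter_mono[OF W] by (auto intro: FieldI1)
      then show ?thesis
        unfolding J_iter_limit[OF W 3, of X] using 3(1) less.IH by (intro is_cong_UNION_chain) auto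
    qed
  qed
qed

section \<open>Fixed points of the enforced collapse are non-singular\<close>

lemma enf_rho_Suc:
  assumes "(i, Suc i) \<in> enf_simeq X R n x"
  shows "enf_rho X R n x (Suc i) = enf_rho X R n x i"
proof -
  have "{j. 0 < j \<and> j \<le> Suc i \<and> (j - 1, j) \<notin> enf_simeq X R n x} =
        {j. 0 < j \<and> j \<le> i \<and> (j - 1, j) \<notin> enf_simeq X R n x}"
    using assms le_Suc_eq by auto
  then show ?thesis
    unfolding enf_rho_def by simp
qed

lemma J_fixpoint_enf_sim_not_less:
  assumes X: "is_sset X" and fixed: "J_step X R = R"
    and nd: "nondeg_q X R n x" and sim: "enf_sim X R n x i j"
  shows "\<not> i < j"
proof
  assume "i < j"
  have x: "x \<in> simp X n"
    using nd unfolding nondeg_q_def by simp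
  have "j \<le> n"
    using sim unfolding enf_sim_def by simp
  then obtain k where n: "n = Suc k" and ik: "i \<le> k"
    using \<open>i < j\<close> by (cases n) auto
  have "(i, Suc i) \<in> enf_approx X R n x"
    unfolding enf_approx_def using sim \<open>i < j\<close> by (auto intro!: exI[of _ j])
  then have "(i, Suc i) \<in> enf_simeq X R n x"
    unfolding enf_simeq_def by blast
  then have rho: "enf_rho X R n x (Suc i) = enf_rho X R n x i"
    by (rule enf_rho_Suc)
  define d where "d l = (if l \<le> i then l else Suc l)" for l
  define t where "t = d \<circ> sdeg i"
  \<comment> \<open>t collapses i + 1 onto i, which rho does not distinguish, so J identifies x with the
     degenerate simplex (x d) s_i.\<close>
  have t: "t l = (if l = Suc i then i else l)" for l
    unfolding t_def d_def sdeg_def by auto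
  have d: "delta_map k n d" and s: "delta_map n k (sdeg i)"
    unfolding delta_map_def d_def sdeg_def using n ik by auto
  have "delta_map n n id" "delta_map n n t"
    unfolding delta_map_def t using \<open>i < j\<close> sim n by (auto simp: enf_sim_def)
  moreover have "\<forall>l\<le>n. enf_rho X R n x (id l) = enf_rho X R n x (t l)"
    using rho by (simp add: t)
  ultimately have "(smap X n n id x, smap X n n t x) \<in> J_step X R n"
    using nd by (intro J_step_identifies)
  then have "(x, smap X n k (sdeg i) (smap X k n d x)) \<in> R n"
    using fixed is_sset_smap_id[OF X x] is_sset_smap_comp[OF X s d x] by (simp add: t_def)
  moreover have "smap X k n d x \<in> simp X k"
    using X d x by (rule is_sset_smap_closed)
  ultimately show False
    using nd n ik unfolding nondeg_q_def by auto
qed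

lemma nonsingular_q_if_J_fixpoint:
  assumes X: "is_sset X" and R: "is_cong X R" and fixed: "J_step X R = R"
  shows "nonsingular_q X R"
  unfolding nonsingular_q_def embedded_q_def
proof (intro allI impI)
  fix n x m \<theta> \<theta>' i
  assume nd: "nondeg_q X R n x" and \<theta>: "delta_map m n \<theta>" and \<theta>': "delta_map m n \<theta>'"
    and rel: "(smap X m n \<theta> x, smap X m n \<theta>' x) \<in> R m" and "i \<le> m"
  have x: "x \<in> simp X n"
    using nd unfolding nondeg_q_def by simp
  have vertex: "delta_map 0 m (\<lambda>_. i)"
    unfolding delta_map_def using \<open>i \<le> m\<close> by auto
  have "(smap X 0 m (\<lambda>_. i) (smap X m n \<theta> x), smap X 0 m (\<lambda>_. i) (smap X m n \<theta>' x)) \<in> R 0"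
    using R vertex rel by (rule is_cong_smap)
  then have "(smap X 0 n (\<lambda>_. \<theta> i) x, smap X 0 n (\<lambda>_. \<theta>' i) x) \<in> R 0"
    using is_sset_smap_comp[OF X vertex \<theta> x] is_sset_smap_comp[OF X vertex \<theta>' x]
    by (simp add: comp_def)
  moreover have "sym (R 0)"
    using is_cong_equiv[OF R] by (auto elim: equivE)
  moreover have "\<theta> i \<le> n" "\<theta>' i \<le> n"
    using \<theta> \<theta>' \<open>i \<le> m\<close> unfolding delta_map_def by auto
  ultimately have "enf_sim X R n x (\<theta> i) (\<theta>' i)" "enf_sim X R n x (\<theta>' i) (\<theta> i)"
    unfolding enf_sim_def by (auto dest: symD)
  then have "\<not> \<theta> i < \<theta>' i" "\<not> \<theta>' i < \<theta> i"
    by (auto dest: J_fixpoint_enf_sim_not_less[OF X fixed nd])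
  then show "\<theta> i = \<theta>' i"
    by simp
qed

section \<open>The iteration becomes stationary\<close>

definition nonleast :: "'a rel \<Rightarrow> 'a rel \<Rightarrow> 'a set" where
  "nonleast w R = {z. \<exists>y. (y, z) \<in> R \<and> (y, z) \<in> w \<and> y \<noteq> z}"

lemma nonleast_mono: "R \<subseteq> R' \<Longrightarrow> nonleast w R \<subseteq> nonleast w R'"
  unfolding nonleast_def by blast

lemma nonleast_psubset:
  assumes w: "well_order_on UNIV w" and R: "equiv A R" and R': "equiv A R'" and "R \<subset> R'"
  shows "nonleast w R \<subset> nonleast w R'"
proof -
  interpret wo: wo_rel w
    using w well_order_on_Well_order by (auto simp: wo_rel_def)
  have Fw: "Field w = UNIV"
    using w well_order_on_Field by blast
  define least where "least a = wo.minim (R `` {a})" for a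
  have least_in: "(a, least a) \<in> R" if "a \<in> A" for a
  proof -
    have "a \<in> R `` {a}"
      using R that by (auto elim: equivE dest: refl_onD)
    then show ?thesis
      unfolding least_def using wo.minim_in[of "R `` {a}"] Fw by auto
  qed
  have least_le: "(least a, z) \<in> w" if "(a, z) \<in> R" for a z
    unfolding least_def using that wo.minim_least[of "R `` {a}" z] Fw by auto
  have new: "least b \<in> nonleast w R' - nonleast w R"
    if ab: "(a, b) \<in> R'" "(a, b) \<notin> R" and "(least a, least b) \<in> w" for a b
  proof -
    have A: "a \<in> A" "b \<in> A"
      using ab(1) R' by (auto elim: equivE)
    have "(least a, a) \<in> R" "(b, least b) \<in> R"
      using least_in A R by (auto elim!: equivE dest: symD)
    moreover have "trans R'"
      using R' by (auto elim: equivE)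
    ultimately have "(least a, least b) \<in> R'"
      using ab(1) \<open>R \<subset> R'\<close> by (blast dest: transD)
    moreover have "least a \<noteq> least b"
    proof
      assume "least a = least b"
      then have "(a, b) \<in> R"
        using \<open>(least a, a) \<in> R\<close> \<open>(b, least b) \<in> R\<close> R
        by (auto elim!: equivE dest: symD transD)
      then show False
        using ab(2) by blast
    qed
    ultimately have "least b \<in> nonleast w R'"
      using \<open>(least a, least b) \<in> w\<close> unfolding nonleast_def by blast
    moreover have "least b \<notin> nonleast w R"
    proof
      assume "least b \<in> nonleast w R"
      then obtain y where "(y, least b) \<in> R" "(y, least b) \<in> w" "y \<noteq> least b"
        unfolding nonleast_def by blast
      moreover have "(b, y) \<in> R"
        using \<open>(y, least b) \<in> R\<close> \<open>(b, least b) \<in> R\<close> R by (auto elim!: equivE dest: symD transD)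
      ultimately show False
        using least_le[of b y] wo.ANTISYM by (auto dest: antisymD)
    qed
    ultimately show ?thesis
      by blast
  qed
  obtain a b where ab: "(a, b) \<in> R'" "(a, b) \<notin> R"
    using \<open>R \<subset> R'\<close> by auto
  then have ba: "(b, a) \<in> R'" "(b, a) \<notin> R"
    using R R' by (auto elim!: equivE dest: symD)
  have "(least a, least b) \<in> w \<or> (least b, least a) \<in> w"
    using wo.TOTALS Fw by blast
  then have "nonleast w R' - nonleast w R \<noteq> {}"
    using new[OF ab] new[OF ba] by blast
  then show ?thesis
    using nonleast_mono \<open>R \<subset> R'\<close> by blast
qed

lemma not_inj_Pow: "\<not> inj (f :: 'b set \<Rightarrow> 'b)"
  using Cantors_theorem[of UNIV] inj_imp_surj_inv by (metis Pow_UNIV)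

lemma no_strict_chain_indexed_by_Pow:
  fixes G H :: "'b set \<Rightarrow> 'b set" and r :: "('b set \<times> 'b set) set"
  assumes W: "Well_order r" and F: "Field r = UNIV"
    and strict: "\<And>b. G b \<subset> H b" and chain: "\<And>b c. (b, c) \<in> r - Id \<Longrightarrow> H b \<subseteq> G c"
  shows False
proof -
  have "\<forall>b. \<exists>p. p \<in> H b - G b"
    using strict by blast
  then have "\<exists>\<phi>. \<forall>b. \<phi> b \<in> H b - G b"
    by (rule choice)
  then obtain \<phi> where \<phi>: "\<forall>b. \<phi> b \<in> H b - G b" ..
  have "\<phi> b \<noteq> \<phi> c" if "(b, c) \<in> r - Id" for b c
  proof -
    have "\<phi> b \<in> G c"
      using \<phi> chain[OF that] by blast
    then show ?thesis
      using \<phi> by auto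
  qed
  then have "inj \<phi>"
  proof (intro injI)
    fix b c
    assume "\<phi> b = \<phi> c"
    show "b = c"
    proof (rule ccontr)
      assume "b \<noteq> c"
      then have "(b, c) \<in> r - Id \<or> (c, b) \<in> r - Id"
        using Well_order_in_diff_Id[OF W, of b c] F by auto
      then show False
        using \<open>\<phi> b = \<phi> c\<close> \<open>\<And>b c. (b, c) \<in> r - Id \<Longrightarrow> \<phi> b \<noteq> \<phi> c\<close> by metis
    qed
  qed
  then show False
    using not_inj_Pow by blast
qed

lemma J_iter_has_fixpoint:
  fixes X :: "'a sset" and r :: "((nat \<times> 'a) set \<times> (nat \<times> 'a) set) set"
  assumes X: "is_sset X" and W: "Well_order r" and F: "Field r = UNIV"
  shows "\<exists>b. J_step X (J_iter X r b) = J_iter X r b"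
proof (rule ccontr)
  assume no_fixpoint: "\<nexists>b. J_step X (J_iter X r b) = J_iter X r b"
  obtain w :: "'a rel" where w: "well_order_on UNIV w"
    using well_order_on by blast
  define N where "N R = (SIGMA n:UNIV. nonleast w (R n))" for R :: "nat \<Rightarrow> 'a rel"
  have N_mono: "N R \<subseteq> N R'" if "R \<le> R'" for R R'
    unfolding N_def using that by (intro Sigma_mono nonleast_mono) (auto simp: le_fun_def)
  have "N (J_iter X r b) \<subset> N (J_step X (J_iter X r b))" for b
  proof -
    let ?R = "J_iter X r b"
    have "J_step X ?R \<noteq> ?R"
      using no_fixpoint by blast
    then obtain n where "?R n \<noteq> J_step X ?R n"
      by (auto simp: fun_eq_iff)
    then have "?R n \<subset> J_step X ?R n"
      using J_step_inflationary[of ?R X] by (auto simp: le_fun_def)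
    moreover have "is_cong X ?R" "is_cong X (J_step X ?R)"
      using is_cong_J_iter[OF X W] is_cong_J_step[OF X] by blast+
    ultimately have "nonleast w (?R n) \<subset> nonleast w (J_step X ?R n)"
      using nonleast_psubset[OF w is_cong_equiv is_cong_equiv] by blast
    then have "N ?R \<noteq> N (J_step X ?R)"
      unfolding N_def by blast
    then show ?thesis
      using N_mono[OF J_step_inflationary] by blast
  qed
  moreover have "N (J_step X (J_iter X r b)) \<subseteq> N (J_iter X r c)" if "(b, c) \<in> r - Id" for b c
    using J_iter_grows[OF W that, of X] N_mono by blast
  ultimately show False
    by (rule no_strict_chain_indexed_by_Pow[OF W F])
qed

theorem mainTheorem13:
  fixes X :: "'a sset"
  assumes "is_sset X"
  shows "\<exists>(r :: ((nat \<times> 'a) set \<times> (nat \<times> 'a) set) set) b.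
           Well_order r \<and> b \<in> Field r \<and> nonsingular_q X (J_iter X r b)"
proof -
  obtain r :: "((nat \<times> 'a) set \<times> (nat \<times> 'a) set) set" where "well_order_on UNIV r"
    using well_order_on by blast
  then have W: "Well_order r" and F: "Field r = UNIV"
    using well_order_on_Well_order by auto
  obtain b where "J_step X (J_iter X r b) = J_iter X r b"
    using J_iter_has_fixpoint[OF assms W F] by blast
  then have "nonsingular_q X (J_iter X r b)"
    by (intro nonsingular_q_if_J_fixpoint[OF assms is_cong_J_iter[OF assms W]])
  then show ?thesis
    using W F by blast
qed

end
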